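(* Let $\mathbb K$ be a field of prime characteristic $p$, $T=\mathbb K[x_1,\dots,x_n]$, $e\ge1$, and $A\subseteq T$ an ideal. (i) For any multiplicative set $W\subseteq T$, $\widetilde{W^{-1}A}^{e}=W^{-1}\widetilde{A}^{e}$ (the left side computed in $W^{-1}T$). (ii) If $\widehat T=\mathbb K[[x_1,\dots,x_n]]$ is the completion of $T$ at $(x_1,\dots,x_n)$, then $\widetilde{A\widehat T}^{e}=\widetilde{A}^{e}\widehat T$ (the left side computed in $\widehat T$).
   Context: In a ring $U$ of characteristic $p$, for an ideal $L$, $L^{[p^e]}$ is the ideal generated by $\{a^{p^e}:a\in L\}$, and for an ideal $A$, $\widetilde{A}^{e}$ is the intersection of all ideals $L\subseteq U$ with $A\subseteq L^{[p^e]}$. *)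

theory Defs
  imports "HOL-Algebra.Algebra" "HOL-Library.Poly_Mapping"
begin

definition frob_bracket :: "('a, 'b) ring_scheme \<Rightarrow> nat \<Rightarrow> 'a set \<Rightarrow> 'a set" where
  "frob_bracket U q L = genideal U ((\<lambda>a. a [^]\<^bsub>U\<^esub> q) ` L)"

definition ideal_tilde :: "('a, 'b) ring_scheme \<Rightarrow> nat \<Rightarrow> nat \<Rightarrow> 'a set \<Rightarrow> 'a set" where
  "ideal_tilde U p e A = \<Inter> {L. ideal L U \<and> A \<subseteq> frob_bracket U (p ^ e) L}"

definition ext_ideal :: "('b, 'c) ring_scheme \<Rightarrow> ('a \<Rightarrow> 'b) \<Rightarrow> 'a set \<Rightarrow> 'b set" where
  "ext_ideal S f I = genideal S (f ` I)"

text \<open>Polynomials in the variables indexed by nat, with exponent vectors as finitely supported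
  functions; K[x_0,...,x_{n-1}] is the subring of polynomials only involving variables < n.\<close>
definition mpoly_ring :: "nat \<Rightarrow> ((nat \<Rightarrow>\<^sub>0 nat) \<Rightarrow>\<^sub>0 'k::field) ring" where
  "mpoly_ring n = \<lparr>carrier = {P :: (nat \<Rightarrow>\<^sub>0 nat) \<Rightarrow>\<^sub>0 'k. \<forall>m\<in>Poly_Mapping.keys P. Poly_Mapping.keys m \<subseteq> {..<n}},
                   monoid.mult = (*), one = 1, ring.zero = 0, ring.add = (+)\<rparr>"

definition ps_mult :: "((nat \<Rightarrow>\<^sub>0 nat) \<Rightarrow> 'k::field) \<Rightarrow> ((nat \<Rightarrow>\<^sub>0 nat) \<Rightarrow> 'k) \<Rightarrow> ((nat \<Rightarrow>\<^sub>0 nat) \<Rightarrow> 'k)" where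
  "ps_mult f g = (\<lambda>m. \<Sum>(a, b) \<in> {(a, b). a + b = m}. f a * g b)"

definition ps_ring :: "nat \<Rightarrow> ((nat \<Rightarrow>\<^sub>0 nat) \<Rightarrow> 'k::field) ring" where
  "ps_ring n = \<lparr>carrier = {f. \<forall>m. \<not> Poly_Mapping.keys m \<subseteq> {..<n} \<longrightarrow> f m = 0},
                 monoid.mult = ps_mult, one = (\<lambda>m. if m = 0 then 1 else 0),
                 ring.zero = (\<lambda>_. 0), ring.add = (\<lambda>f g m. f m + g m)\<rparr>"

definition mpoly_to_ps :: "((nat \<Rightarrow>\<^sub>0 nat) \<Rightarrow>\<^sub>0 'k::field) \<Rightarrow> ((nat \<Rightarrow>\<^sub>0 nat) \<Rightarrow> 'k)" where
  "mpoly_to_ps P = Poly_Mapping.lookup P"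

definition loc_rel :: "('a, 'b) ring_scheme \<Rightarrow> 'a set \<Rightarrow> (('a \<times> 'a) \<times> ('a \<times> 'a)) set" where
  "loc_rel R W = {((a, s), (b, t)). a \<in> carrier R \<and> s \<in> W \<and> b \<in> carrier R \<and> t \<in> W \<and>
                   (\<exists>u\<in>W. u \<otimes>\<^bsub>R\<^esub> (t \<otimes>\<^bsub>R\<^esub> a \<ominus>\<^bsub>R\<^esub> s \<otimes>\<^bsub>R\<^esub> b) = \<zero>\<^bsub>R\<^esub>)}"

definition loc_frac :: "('a, 'b) ring_scheme \<Rightarrow> 'a set \<Rightarrow> 'a \<Rightarrow> 'a \<Rightarrow> ('a \<times> 'a) set" where
  "loc_frac R W a s = loc_rel R W `` {(a, s)}"

definition loc :: "('a, 'b) ring_scheme \<Rightarrow> 'a set \<Rightarrow> (('a \<times> 'a) set) ring" where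
  "loc R W = \<lparr>carrier = (carrier R \<times> W) // loc_rel R W,
     monoid.mult = (\<lambda>F G. loc_frac R W (fst (SOME x. x \<in> F) \<otimes>\<^bsub>R\<^esub> fst (SOME y. y \<in> G))
                                       (snd (SOME x. x \<in> F) \<otimes>\<^bsub>R\<^esub> snd (SOME y. y \<in> G))),
     one = loc_frac R W \<one>\<^bsub>R\<^esub> \<one>\<^bsub>R\<^esub>,
     ring.zero = loc_frac R W \<zero>\<^bsub>R\<^esub> \<one>\<^bsub>R\<^esub>,
     ring.add = (\<lambda>F G. loc_frac R W
        (fst (SOME x. x \<in> F) \<otimes>\<^bsub>R\<^esub> snd (SOME y. y \<in> G) \<oplus>\<^bsub>R\<^esub> fst (SOME y. y \<in> G) \<otimes>\<^bsub>R\<^esub> snd (SOME x. x \<in> F))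
        (snd (SOME x. x \<in> F) \<otimes>\<^bsub>R\<^esub> snd (SOME y. y \<in> G)))\<rparr>"

definition loc_map :: "('a, 'b) ring_scheme \<Rightarrow> 'a set \<Rightarrow> 'a \<Rightarrow> ('a \<times> 'a) set" where
  "loc_map R W a = loc_frac R W a \<one>\<^bsub>R\<^esub>"

definition multiplicative_set :: "('a, 'b) ring_scheme \<Rightarrow> 'a set \<Rightarrow> bool" where
  "multiplicative_set R W \<longleftrightarrow> W \<subseteq> carrier R \<and> \<one>\<^bsub>R\<^esub> \<in> W \<and>
     (\<forall>s\<in>W. \<forall>t\<in>W. s \<otimes>\<^bsub>R\<^esub> t \<in> W)"

end

theory Submission
  imports Defs
begin

(* Let q = p^e. The polynomial ring K[x] is free over its subring K[x]^q, with basis the elements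
   b x^a, where b runs through a basis of K over K^q and 0 <= a_i < q. Taking q-th roots of the
   coordinates gives maps pi_i with P = sum_i b x^a pi_i(P)^q; each pi_i is additive and satisfies
   pi_i(h^q c) = h pi_i(c). Any such map sends L^[q] into L, so A~^e is the ideal generated by the
   pi_i(f), f in A. The pi_i extend to K[[x]] coefficientwise and to W^-1 K[x] by
   pi_i(f/s) = pi_i(f s^(q-1))/s, keeping both properties and commuting with the canonical maps;
   hence the generators of A~^e are carried to generators of the tilde of the extended ideal. *)

section \<open>Frobenius brackets and Frobenius-linear maps\<close>

lemma frob_bracket_ideal:
  assumes "ring R" "L \<subseteq> carrier R"
  shows "ideal (frob_bracket R q L) R"
  unfolding frob_bracket_def
  using assms by (intro ring.genideal_ideal) (auto intro: monoid.nat_pow_closed ring.is_monoid)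

lemma pow_mem_frob_bracket: "a \<in> L \<Longrightarrow> a [^]\<^bsub>R\<^esub> q \<in> frob_bracket R q L"
  unfolding frob_bracket_def genideal_def by blast

lemma frob_bracket_mono:
  assumes "ring R" "M \<subseteq> carrier R" "L \<subseteq> M"
  shows "frob_bracket R q L \<subseteq> frob_bracket R q M"
  unfolding frob_bracket_def
  using assms pow_mem_frob_bracket[of _ M R q] frob_bracket_ideal[OF assms(1,2), of q]
  by (intro ring.genideal_minimal) (auto simp: frob_bracket_def)

lemma (in ring_hom_ring) frob_bracket_image_subset:
  assumes G: "G \<subseteq> carrier R" and E: "ideal E S" and GE: "h ` G \<subseteq> E"
  shows "h ` frob_bracket R q G \<subseteq> frob_bracket S q E"
proof -
  have "ideal {r \<in> carrier R. h r \<in> frob_bracket S q E} R"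
    using E by (intro ideal_vimage frob_bracket_ideal S.ring_axioms ideal.axioms(1)[THEN additive_subgroup.a_subset])
  moreover have "(\<lambda>a. a [^] q) ` G \<subseteq> {r \<in> carrier R. h r \<in> frob_bracket S q E}"
    using G GE by (force simp: hom_nat_pow intro!: pow_mem_frob_bracket)
  ultimately have "frob_bracket R q G \<subseteq> {r \<in> carrier R. h r \<in> frob_bracket S q E}"
    unfolding frob_bracket_def by (rule R.genideal_minimal)
  thus ?thesis by blast
qed

lemma (in ring_hom_ring) genideal_image_genideal:
  assumes "Y \<subseteq> carrier R"
  shows "genideal S (h ` genideal R Y) = genideal S (h ` Y)"
proof
  have "genideal R Y \<subseteq> {r \<in> carrier R. h r \<in> genideal S (h ` Y)}"
    using assms S.genideal_self[of "h ` Y"] by (intro R.genideal_minimal ideal_vimage S.genideal_ideal) force+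
  thus "genideal S (h ` genideal R Y) \<subseteq> genideal S (h ` Y)"
    using assms by (intro S.genideal_minimal S.genideal_ideal) auto
  have "genideal R Y \<subseteq> carrier R" using R.genideal_ideal[OF assms] by (blast dest: ideal.Icarr)
  hence "h ` Y \<subseteq> genideal S (h ` genideal R Y)"
    using R.genideal_self[OF assms] S.genideal_self[of "h ` genideal R Y"] by force
  thus "genideal S (h ` Y) \<subseteq> genideal S (h ` genideal R Y)"
    using \<open>genideal R Y \<subseteq> carrier R\<close> by (intro S.genideal_minimal S.genideal_ideal) auto
qed

lemma ideal_tilde_eqI:
  assumes "ideal G R" "A \<subseteq> frob_bracket R (p ^ e) G"
    and "\<And>L. ideal L R \<Longrightarrow> A \<subseteq> frob_bracket R (p ^ e) L \<Longrightarrow> G \<subseteq> L"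
  shows "ideal_tilde R p e A = G"
  unfolding ideal_tilde_def using assms by blast

locale frobenius_linear = cring R for R (structure) +
  fixes q :: nat and \<pi> :: "'a \<Rightarrow> 'a"
  assumes closed: "x \<in> carrier R \<Longrightarrow> \<pi> x \<in> carrier R"
    and additive: "\<lbrakk>x \<in> carrier R; y \<in> carrier R\<rbrakk> \<Longrightarrow> \<pi> (x \<oplus> y) = \<pi> x \<oplus> \<pi> y"
    and pow_mult: "\<lbrakk>h \<in> carrier R; c \<in> carrier R\<rbrakk> \<Longrightarrow> \<pi> (h [^] q \<otimes> c) = h \<otimes> \<pi> c"
begin

lemma zero: "\<pi> \<zero> = \<zero>"
  using additive[of \<zero> \<zero>] closed[of \<zero>] by (metis zero_closed add.l_cancel_one')

lemma ideal_mult_vimage: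
  assumes L: "ideal L R"
  shows "ideal {x \<in> carrier R. \<forall>r \<in> carrier R. \<pi> (r \<otimes> x) \<in> L} R" (is "ideal ?J R")
proof (rule idealI)
  interpret L: ideal L R by fact
  show "ring R" ..
  show "subgroup ?J (add_monoid R)"
  proof (rule add.subgroupI)
    show "?J \<subseteq> carrier R" by auto
    show "?J \<noteq> {}" using zero by (auto intro!: exI[of _ \<zero>])
    fix a b assume a: "a \<in> ?J" and b: "b \<in> ?J"
    have "r \<otimes> \<ominus> a = (\<ominus> r) \<otimes> a" if "r \<in> carrier R" for r
      using a that by (simp add: r_minus l_minus)
    thus "\<ominus> a \<in> ?J" using a by auto
    show "a \<oplus> b \<in> ?J" using a b by (auto simp: r_distr additive)
  qed
  fix a x assume a: "a \<in> ?J" and x: "x \<in> carrier R"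
  have "r \<otimes> (x \<otimes> a) = (r \<otimes> x) \<otimes> a" if "r \<in> carrier R" for r
    using a x that by (simp add: m_assoc)
  thus "x \<otimes> a \<in> ?J" using a x by auto
  thus "a \<otimes> x \<in> ?J" using a x by (simp add: m_comm)
qed

lemma mem_of_mem_frob_bracket:
  assumes L: "ideal L R" and x: "x \<in> frob_bracket R q L"
  shows "\<pi> x \<in> L"
proof -
  interpret L: ideal L R by fact
  let ?J = "{x \<in> carrier R. \<forall>r \<in> carrier R. \<pi> (r \<otimes> x) \<in> L}"
  have "(\<lambda>a. a [^] q) ` L \<subseteq> ?J"
    by (auto simp: m_comm[of _ "_ [^] q"] pow_mult closed L.I_r_closed)
  hence "frob_bracket R q L \<subseteq> ?J"
    unfolding frob_bracket_def by (rule genideal_minimal[OF ideal_mult_vimage[OF L]])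
  with x have "\<pi> (\<one> \<otimes> x) \<in> L" by blast
  thus ?thesis using x \<open>frob_bracket R q L \<subseteq> ?J\<close> by auto
qed

end

lemma frobenius_linear_vimage:
  assumes "cring R" "frobenius_linear S q \<pi>'" "\<phi> \<in> ring_hom R S" "inj_on \<phi> (carrier R)"
    and closed: "\<And>x. x \<in> carrier R \<Longrightarrow> \<pi> x \<in> carrier R"
    and compat: "\<And>x. x \<in> carrier R \<Longrightarrow> \<pi>' (\<phi> x) = \<phi> (\<pi> x)"
  shows "frobenius_linear R q \<pi>"
proof -
  interpret R: cring R by fact
  interpret S: frobenius_linear S q \<pi>' by fact
  interpret ring_hom_cring R S \<phi> by (intro ring_hom_cringI assms S.is_cring)
  have eq: "\<phi> x = \<phi> y \<Longrightarrow> x = y" if "x \<in> carrier R" "y \<in> carrier R" for x y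
    using assms(4) that by (auto dest: inj_onD)
  show ?thesis
  proof
    fix x y h c assume x: "x \<in> carrier R" and y: "y \<in> carrier R"
      and h: "h \<in> carrier R" and c: "c \<in> carrier R"
    show "\<pi> x \<in> carrier R" by (rule closed[OF x])
    show "\<pi> (x \<oplus>\<^bsub>R\<^esub> y) = \<pi> x \<oplus>\<^bsub>R\<^esub> \<pi> y"
      using x y closed by (intro eq) (auto simp flip: compat simp: S.additive)
    show "\<pi> (h [^]\<^bsub>R\<^esub> q \<otimes>\<^bsub>R\<^esub> c) = h \<otimes>\<^bsub>R\<^esub> \<pi> c"
      using h c closed by (intro eq) (auto simp flip: compat simp: S.pow_mult hom_nat_pow)
  qed
qed

(* Models R being free over its subring of q-th powers; the pi i play the role of the coordinate
   maps, taken up to q-th roots. *)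
locale frobenius_splitting = cring R for R (structure) +
  fixes q :: nat and I :: "'i set" and \<pi> :: "'i \<Rightarrow> 'a \<Rightarrow> 'a"
  assumes linear: "i \<in> I \<Longrightarrow> frobenius_linear R q (\<pi> i)"
    and spanning: "a \<in> carrier R \<Longrightarrow> a \<in> frob_bracket R q ((\<lambda>i. \<pi> i a) ` I)"
begin

lemma projections_closed: "A \<subseteq> carrier R \<Longrightarrow> {\<pi> i a | i a. i \<in> I \<and> a \<in> A} \<subseteq> carrier R"
  by (auto dest: linear frobenius_linear.closed)

lemma subset_frob_bracket_projections:
  assumes A: "A \<subseteq> carrier R"
  shows "A \<subseteq> frob_bracket R q (genideal R {\<pi> i a | i a. i \<in> I \<and> a \<in> A})"
    (is "_ \<subseteq> frob_bracket R q ?G")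
proof
  fix a assume a: "a \<in> A"
  have G: "ideal ?G R" by (rule genideal_ideal[OF projections_closed[OF A]])
  have "(\<lambda>i. \<pi> i a) ` I \<subseteq> ?G"
    using a genideal_self[OF projections_closed[OF A]] by blast
  moreover have "a \<in> frob_bracket R q ((\<lambda>i. \<pi> i a) ` I)" using a A by (auto intro: spanning)
  ultimately show "a \<in> frob_bracket R q ?G"
    using G by (blast dest: frob_bracket_mono[OF ring_axioms] ideal.axioms(1) additive_subgroup.a_subset)
qed

lemma ideal_tilde_eq_genideal:
  assumes A: "A \<subseteq> carrier R" and q: "q = p ^ e"
  shows "ideal_tilde R p e A = genideal R {\<pi> i a | i a. i \<in> I \<and> a \<in> A}"
proof (rule ideal_tilde_eqI, unfold q[symmetric])
  show "ideal (genideal R {\<pi> i a | i a. i \<in> I \<and> a \<in> A}) R"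
    by (rule genideal_ideal[OF projections_closed[OF A]])
  show "A \<subseteq> frob_bracket R q (genideal R {\<pi> i a | i a. i \<in> I \<and> a \<in> A})"
    by (rule subset_frob_bracket_projections[OF A])
  fix L assume "ideal L R" "A \<subseteq> frob_bracket R q L"
  thus "genideal R {\<pi> i a | i a. i \<in> I \<and> a \<in> A} \<subseteq> L"
    by (intro genideal_minimal) (auto intro: frobenius_linear.mem_of_mem_frob_bracket[OF linear])
qed

lemma ext_ideal_subset_frob_bracket:
  assumes S: "cring S" and hom: "\<phi> \<in> ring_hom R S" and A: "A \<subseteq> carrier R"
  shows "ext_ideal S \<phi> A \<subseteq> frob_bracket S q (genideal S (\<phi> ` {\<pi> i a | i a. i \<in> I \<and> a \<in> A}))"
    (is "_ \<subseteq> frob_bracket S q ?E")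
proof -
  interpret S: cring S by fact
  interpret ring_hom_ring R S \<phi> by (intro ring_hom_ringI2 ring_axioms S.ring_axioms hom)
  let ?Y = "{\<pi> i a | i a. i \<in> I \<and> a \<in> A}"
  have Y: "?Y \<subseteq> carrier R" by (rule projections_closed[OF A])
  have E: "ideal ?E S" using Y by (intro S.genideal_ideal) (blast intro: hom_closed)
  have G: "genideal R ?Y \<subseteq> carrier R" using genideal_ideal[OF Y] by (blast dest: ideal.Icarr)
  hence "\<phi> ` genideal R ?Y \<subseteq> genideal S (\<phi> ` genideal R ?Y)"
    by (intro S.genideal_self) auto
  hence "\<phi> ` genideal R ?Y \<subseteq> ?E"
    unfolding genideal_image_genideal[OF Y] .
  hence "\<phi> ` frob_bracket R q (genideal R ?Y) \<subseteq> frob_bracket S q ?E"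
    by (rule frob_bracket_image_subset[OF G E])
  hence "\<phi> ` A \<subseteq> frob_bracket S q ?E"
    using subset_frob_bracket_projections[OF A] by blast
  moreover have "ideal (frob_bracket S q ?E) S"
    using E by (intro frob_bracket_ideal[OF S.ring_axioms]) (auto dest: ideal.Icarr)
  ultimately show ?thesis
    unfolding ext_ideal_def by (intro S.genideal_minimal)
qed

theorem ideal_tilde_ext_ideal:
  assumes S: "cring S" and hom: "\<phi> \<in> ring_hom R S"
    and linear': "\<And>i. i \<in> I \<Longrightarrow> frobenius_linear S q (\<pi>' i)"
    and compat: "\<And>i a. i \<in> I \<Longrightarrow> a \<in> carrier R \<Longrightarrow> \<pi>' i (\<phi> a) = \<phi> (\<pi> i a)"
    and A: "A \<subseteq> carrier R" and q: "q = p ^ e"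
  shows "ideal_tilde S p e (ext_ideal S \<phi> A) = ext_ideal S \<phi> (ideal_tilde R p e A)"
proof -
  interpret S: cring S by fact
  interpret ring_hom_ring R S \<phi> by (intro ring_hom_ringI2 ring_axioms S.ring_axioms hom)
  define Y where "Y = {\<pi> i a | i a. i \<in> I \<and> a \<in> A}"
  have Y: "Y \<subseteq> carrier R" unfolding Y_def by (rule projections_closed[OF A])
  have "ideal_tilde S p e (ext_ideal S \<phi> A) = genideal S (\<phi> ` Y)"
  proof (rule ideal_tilde_eqI, unfold q[symmetric])
    show "ideal (genideal S (\<phi> ` Y)) S" using Y by (intro S.genideal_ideal) auto
    show "ext_ideal S \<phi> A \<subseteq> frob_bracket S q (genideal S (\<phi> ` Y))"
      unfolding Y_def by (rule ext_ideal_subset_frob_bracket[OF S hom A])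
    fix L assume L: "ideal L S" and AL: "ext_ideal S \<phi> A \<subseteq> frob_bracket S q L"
    have "\<phi> (\<pi> i a) \<in> L" if "i \<in> I" "a \<in> A" for i a
    proof -
      have "\<phi> a \<in> frob_bracket S q L"
        using that A AL S.genideal_self[of "\<phi> ` A"] unfolding ext_ideal_def by force
      thus ?thesis
        using that A frobenius_linear.mem_of_mem_frob_bracket[OF linear' L] compat by force
    qed
    thus "genideal S (\<phi> ` Y) \<subseteq> L" by (intro S.genideal_minimal L) (auto simp: Y_def)
  qed
  also have "\<dots> = ext_ideal S \<phi> (ideal_tilde R p e A)"
    unfolding ext_ideal_def ideal_tilde_eq_genideal[OF A q] Y_def[symmetric]
    by (rule genideal_image_genideal[OF Y, symmetric])
  finally show ?thesis .
qed

end

section \<open>Localization\<close>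

locale localization = cring R for R (structure) +
  fixes W assumes multiplicative: "multiplicative_set R W"
begin

lemma W_carrier: "s \<in> W \<Longrightarrow> s \<in> carrier R"
  and one_in_W: "\<one> \<in> W"
  and mult_in_W: "s \<in> W \<Longrightarrow> t \<in> W \<Longrightarrow> s \<otimes> t \<in> W"
  using multiplicative unfolding multiplicative_set_def by auto

lemma pow_in_W: "s \<in> W \<Longrightarrow> s [^] (n::nat) \<in> W"
  by (induction n) (auto simp: one_in_W mult_in_W)

lemma loc_rel_iff: "((a, s), (b, t)) \<in> loc_rel R W \<longleftrightarrow>
   a \<in> carrier R \<and> s \<in> W \<and> b \<in> carrier R \<and> t \<in> W \<and> (\<exists>u\<in>W. u \<otimes> (t \<otimes> a) = u \<otimes> (s \<otimes> b))"
proof -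
  have "u \<otimes> (t \<otimes> a \<ominus> s \<otimes> b) = \<zero> \<longleftrightarrow> u \<otimes> (t \<otimes> a) = u \<otimes> (s \<otimes> b)"
    if "a \<in> carrier R" "s \<in> W" "b \<in> carrier R" "t \<in> W" "u \<in> W" for u
  proof -
    have "u \<otimes> (t \<otimes> a \<ominus> s \<otimes> b) = u \<otimes> (t \<otimes> a) \<ominus> u \<otimes> (s \<otimes> b)"
      using that W_carrier by (simp add: minus_eq r_distr r_minus)
    thus ?thesis using that W_carrier by simp
  qed
  thus ?thesis unfolding loc_rel_def by auto
qed

lemma equiv_loc_rel: "equiv (carrier R \<times> W) (loc_rel R W)"
proof (rule equivI)
  show "loc_rel R W \<subseteq> (carrier R \<times> W) \<times> (carrier R \<times> W)" by (auto simp: loc_rel_def)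
  show "refl_on (carrier R \<times> W) (loc_rel R W)"
    unfolding refl_on_def using one_in_W W_carrier by (auto simp: loc_rel_iff)
  show "sym (loc_rel R W)"
    unfolding sym_def by (auto simp: loc_rel_iff) metis
  show "trans (loc_rel R W)"
    unfolding trans_def
  proof safe
    fix a s b t c r
    assume "((a, s), (b, t)) \<in> loc_rel R W" and "((b, t), (c, r)) \<in> loc_rel R W"
    then obtain u v where u: "u \<in> W" "u \<otimes> (t \<otimes> a) = u \<otimes> (s \<otimes> b)"
      and v: "v \<in> W" "v \<otimes> (r \<otimes> b) = v \<otimes> (t \<otimes> c)"
      and c: "a \<in> carrier R" "s \<in> W" "b \<in> carrier R" "t \<in> W" "c \<in> carrier R" "r \<in> W"
      by (auto simp: loc_rel_iff)
    note cc = c W_carrier[OF c(2)] W_carrier[OF c(4)] W_carrier[OF c(6)] W_carrier[OF u(1)] W_carrier[OF v(1)]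
    have "(u \<otimes> v \<otimes> t) \<otimes> (r \<otimes> a) = (v \<otimes> r) \<otimes> (u \<otimes> (t \<otimes> a))"
      using cc by (simp add: m_ac)
    also have "\<dots> = (v \<otimes> r) \<otimes> (u \<otimes> (s \<otimes> b))" using u by simp
    also have "\<dots> = (u \<otimes> s) \<otimes> (v \<otimes> (r \<otimes> b))" using cc by (simp add: m_ac)
    also have "\<dots> = (u \<otimes> s) \<otimes> (v \<otimes> (t \<otimes> c))" using v by simp
    also have "\<dots> = (u \<otimes> v \<otimes> t) \<otimes> (s \<otimes> c)" using cc by (simp add: m_ac)
    finally show "((a, s), (c, r)) \<in> loc_rel R W"
      using c u v mult_in_W by (auto simp: loc_rel_iff intro!: bexI[of _ "u \<otimes> v \<otimes> t"])
  qed
qed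

lemma loc_frac_in_carrier: "a \<in> carrier R \<Longrightarrow> s \<in> W \<Longrightarrow> loc_frac R W a s \<in> carrier (loc R W)"
  unfolding loc_def loc_frac_def by (auto intro: quotientI)

lemma loc_frac_eq_iff: "a \<in> carrier R \<Longrightarrow> s \<in> W \<Longrightarrow> b \<in> carrier R \<Longrightarrow> t \<in> W \<Longrightarrow>
   loc_frac R W a s = loc_frac R W b t \<longleftrightarrow> ((a, s), (b, t)) \<in> loc_rel R W"
  unfolding loc_frac_def by (rule eq_equiv_class_iff[OF equiv_loc_rel]) auto

lemma loc_frac_eqI: "a \<in> carrier R \<Longrightarrow> s \<in> W \<Longrightarrow> b \<in> carrier R \<Longrightarrow> t \<in> W \<Longrightarrow>
   t \<otimes> a = s \<otimes> b \<Longrightarrow> loc_frac R W a s = loc_frac R W b t"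
  using one_in_W W_carrier by (subst loc_frac_eq_iff) (auto simp: loc_rel_iff intro!: bexI[of _ \<one>])

lemma loc_carrier_some_rep:
  assumes "F \<in> carrier (loc R W)"
  shows "(SOME x. x \<in> F) \<in> carrier R \<times> W \<and> F = loc_frac R W (fst (SOME x. x \<in> F)) (snd (SOME x. x \<in> F))"
proof -
  from assms obtain z where z: "z \<in> carrier R \<times> W" "F = loc_rel R W `` {z}"
    unfolding loc_def by (auto elim: quotientE)
  have "z \<in> F" using z equiv_loc_rel by (auto dest: equiv_class_self)
  hence "(SOME x. x \<in> F) \<in> F" by (rule someI)
  hence zx: "(z, SOME x. x \<in> F) \<in> loc_rel R W" using z by auto
  hence "(SOME x. x \<in> F) \<in> carrier R \<times> W" by (auto simp: loc_rel_def)
  moreover have "F = loc_rel R W `` {SOME x. x \<in> F}"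
    using z equiv_class_eq[OF equiv_loc_rel zx] by simp
  ultimately show ?thesis unfolding loc_frac_def by simp
qed

lemma loc_carrier_cases:
  assumes "F \<in> carrier (loc R W)"
  obtains a s where "a \<in> carrier R" "s \<in> W" "F = loc_frac R W a s"
  using loc_carrier_some_rep[OF assms] by (metis mem_Times_iff)

lemma loc_rel_some_rep:
  assumes "a \<in> carrier R" "s \<in> W"
  shows "((fst (SOME x. x \<in> loc_frac R W a s), snd (SOME x. x \<in> loc_frac R W a s)), (a, s)) \<in> loc_rel R W"
proof -
  note r = loc_carrier_some_rep[OF loc_frac_in_carrier[OF assms]]
  hence "loc_frac R W (fst (SOME x. x \<in> loc_frac R W a s)) (snd (SOME x. x \<in> loc_frac R W a s)) = loc_frac R W a s"
    by simp
  thus ?thesis using r assms by (subst (asm) loc_frac_eq_iff) auto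
qed

lemma loc_rel_mult:
  assumes "((a', s'), (a, s)) \<in> loc_rel R W" and "((b', t'), (b, t)) \<in> loc_rel R W"
  shows "((a' \<otimes> b', s' \<otimes> t'), (a \<otimes> b, s \<otimes> t)) \<in> loc_rel R W"
proof -
  from assms obtain u v where u: "u \<in> W" "u \<otimes> (s \<otimes> a') = u \<otimes> (s' \<otimes> a)"
      and v: "v \<in> W" "v \<otimes> (t \<otimes> b') = v \<otimes> (t' \<otimes> b)"
      and c: "a' \<in> carrier R" "s' \<in> W" "a \<in> carrier R" "s \<in> W" "b' \<in> carrier R" "t' \<in> W" "b \<in> carrier R" "t \<in> W"
    by (auto simp: loc_rel_iff)
  note cc = c W_carrier[OF c(2)] W_carrier[OF c(4)] W_carrier[OF c(6)] W_carrier[OF c(8)] W_carrier[OF u(1)] W_carrier[OF v(1)]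
  have "(u \<otimes> v) \<otimes> ((s \<otimes> t) \<otimes> (a' \<otimes> b')) = (u \<otimes> (s \<otimes> a')) \<otimes> (v \<otimes> (t \<otimes> b'))"
    using cc by (simp add: m_ac)
  also have "\<dots> = (u \<otimes> (s' \<otimes> a)) \<otimes> (v \<otimes> (t' \<otimes> b))" using u v by simp
  also have "\<dots> = (u \<otimes> v) \<otimes> ((s' \<otimes> t') \<otimes> (a \<otimes> b))" using cc by (simp add: m_ac)
  finally show ?thesis using c u v mult_in_W by (auto simp: loc_rel_iff intro!: bexI[of _ "u \<otimes> v"])
qed

lemma loc_rel_add:
  assumes "((a', s'), (a, s)) \<in> loc_rel R W" and "((b', t'), (b, t)) \<in> loc_rel R W"
  shows "((a' \<otimes> t' \<oplus> b' \<otimes> s', s' \<otimes> t'), (a \<otimes> t \<oplus> b \<otimes> s, s \<otimes> t)) \<in> loc_rel R W"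
proof -
  from assms obtain u v where u: "u \<in> W" "u \<otimes> (s \<otimes> a') = u \<otimes> (s' \<otimes> a)"
      and v: "v \<in> W" "v \<otimes> (t \<otimes> b') = v \<otimes> (t' \<otimes> b)"
      and c: "a' \<in> carrier R" "s' \<in> W" "a \<in> carrier R" "s \<in> W" "b' \<in> carrier R" "t' \<in> W" "b \<in> carrier R" "t \<in> W"
    by (auto simp: loc_rel_iff)
  note cc = c W_carrier[OF c(2)] W_carrier[OF c(4)] W_carrier[OF c(6)] W_carrier[OF c(8)] W_carrier[OF u(1)] W_carrier[OF v(1)]
  have "(u \<otimes> v) \<otimes> ((s \<otimes> t) \<otimes> (a' \<otimes> t' \<oplus> b' \<otimes> s')) =
      (v \<otimes> t \<otimes> t') \<otimes> (u \<otimes> (s \<otimes> a')) \<oplus> (u \<otimes> s \<otimes> s') \<otimes> (v \<otimes> (t \<otimes> b'))"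
    using cc by (simp add: m_ac r_distr)
  also have "\<dots> = (v \<otimes> t \<otimes> t') \<otimes> (u \<otimes> (s' \<otimes> a)) \<oplus> (u \<otimes> s \<otimes> s') \<otimes> (v \<otimes> (t' \<otimes> b))" using u v by simp
  also have "\<dots> = (u \<otimes> v) \<otimes> ((s' \<otimes> t') \<otimes> (a \<otimes> t \<oplus> b \<otimes> s))" using cc by (simp add: m_ac r_distr)
  finally show ?thesis using c cc u v mult_in_W by (auto simp: loc_rel_iff intro!: bexI[of _ "u \<otimes> v"])
qed

lemma loc_mult_frac:
  assumes "a \<in> carrier R" "s \<in> W" "b \<in> carrier R" "t \<in> W"
  shows "loc_frac R W a s \<otimes>\<^bsub>loc R W\<^esub> loc_frac R W b t = loc_frac R W (a \<otimes> b) (s \<otimes> t)"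
proof -
  let ?x = "SOME x. x \<in> loc_frac R W a s" and ?y = "SOME y. y \<in> loc_frac R W b t"
  have "((fst ?x \<otimes> fst ?y, snd ?x \<otimes> snd ?y), (a \<otimes> b, s \<otimes> t)) \<in> loc_rel R W"
    using assms by (intro loc_rel_mult loc_rel_some_rep)
  hence "loc_frac R W (fst ?x \<otimes> fst ?y) (snd ?x \<otimes> snd ?y) = loc_frac R W (a \<otimes> b) (s \<otimes> t)"
    by (subst loc_frac_eq_iff) (auto simp: loc_rel_def)
  thus ?thesis by (simp add: loc_def)
qed

lemma loc_add_frac:
  assumes "a \<in> carrier R" "s \<in> W" "b \<in> carrier R" "t \<in> W"
  shows "loc_frac R W a s \<oplus>\<^bsub>loc R W\<^esub> loc_frac R W b t = loc_frac R W (a \<otimes> t \<oplus> b \<otimes> s) (s \<otimes> t)"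
proof -
  let ?x = "SOME x. x \<in> loc_frac R W a s" and ?y = "SOME y. y \<in> loc_frac R W b t"
  have "((fst ?x \<otimes> snd ?y \<oplus> fst ?y \<otimes> snd ?x, snd ?x \<otimes> snd ?y), (a \<otimes> t \<oplus> b \<otimes> s, s \<otimes> t)) \<in> loc_rel R W"
    using assms by (intro loc_rel_add loc_rel_some_rep)
  hence "loc_frac R W (fst ?x \<otimes> snd ?y \<oplus> fst ?y \<otimes> snd ?x) (snd ?x \<otimes> snd ?y)
      = loc_frac R W (a \<otimes> t \<oplus> b \<otimes> s) (s \<otimes> t)"
    by (subst loc_frac_eq_iff) (auto simp: loc_rel_def)
  thus ?thesis by (simp add: loc_def)
qed

lemma loc_zero: "\<zero>\<^bsub>loc R W\<^esub> = loc_frac R W \<zero> \<one>"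
  and loc_one: "\<one>\<^bsub>loc R W\<^esub> = loc_frac R W \<one> \<one>"
  by (simp_all add: loc_def)

lemmas loc_frac_simps = loc_mult_frac loc_add_frac loc_zero loc_one loc_frac_in_carrier

lemma abelian_group_loc: "abelian_group (loc R W)"
proof (rule abelian_groupI)
  fix x y z assume "x \<in> carrier (loc R W)" "y \<in> carrier (loc R W)" "z \<in> carrier (loc R W)"
  then obtain a s b t c r where fracs: "x = loc_frac R W a s" "y = loc_frac R W b t" "z = loc_frac R W c r"
    and "a \<in> carrier R" "s \<in> W" "b \<in> carrier R" "t \<in> W" "c \<in> carrier R" "r \<in> W"
    by (metis loc_carrier_cases)
  note c = this(4-9) W_carrier one_in_W mult_in_W
  show "x \<oplus>\<^bsub>loc R W\<^esub> y \<in> carrier (loc R W)" using c by (simp add: fracs loc_frac_simps)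
  show "x \<oplus>\<^bsub>loc R W\<^esub> y = y \<oplus>\<^bsub>loc R W\<^esub> x"
    using c by (simp add: fracs loc_frac_simps) (rule loc_frac_eqI, auto simp: m_ac a_ac)
  show "x \<oplus>\<^bsub>loc R W\<^esub> y \<oplus>\<^bsub>loc R W\<^esub> z = x \<oplus>\<^bsub>loc R W\<^esub> (y \<oplus>\<^bsub>loc R W\<^esub> z)"
    using c by (simp add: fracs loc_frac_simps) (rule loc_frac_eqI, auto simp: m_ac a_ac l_distr r_distr)
  show "\<zero>\<^bsub>loc R W\<^esub> \<oplus>\<^bsub>loc R W\<^esub> x = x" using c by (simp add: fracs loc_frac_simps)
  have "loc_frac R W (\<ominus> a) s \<oplus>\<^bsub>loc R W\<^esub> x = \<zero>\<^bsub>loc R W\<^esub>"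
    using c by (simp add: fracs loc_frac_simps)
      (rule loc_frac_eqI, auto simp: l_minus m_comm[of a s] l_neg)
  thus "\<exists>y\<in>carrier (loc R W). y \<oplus>\<^bsub>loc R W\<^esub> x = \<zero>\<^bsub>loc R W\<^esub>"
    using c by (auto intro: loc_frac_in_carrier)
qed (simp add: loc_frac_simps one_in_W)

lemma comm_monoid_loc: "comm_monoid (loc R W)"
proof (rule comm_monoidI)
  fix x y z assume "x \<in> carrier (loc R W)" "y \<in> carrier (loc R W)" "z \<in> carrier (loc R W)"
  then obtain a s b t c r where fracs: "x = loc_frac R W a s" "y = loc_frac R W b t" "z = loc_frac R W c r"
    and "a \<in> carrier R" "s \<in> W" "b \<in> carrier R" "t \<in> W" "c \<in> carrier R" "r \<in> W"
    by (metis loc_carrier_cases)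
  note c = this(4-9) W_carrier one_in_W mult_in_W
  show "x \<otimes>\<^bsub>loc R W\<^esub> y \<in> carrier (loc R W)" using c by (simp add: fracs loc_frac_simps)
  show "x \<otimes>\<^bsub>loc R W\<^esub> y = y \<otimes>\<^bsub>loc R W\<^esub> x"
    using c by (simp add: fracs loc_frac_simps) (rule loc_frac_eqI, auto simp: m_ac)
  show "x \<otimes>\<^bsub>loc R W\<^esub> y \<otimes>\<^bsub>loc R W\<^esub> z = x \<otimes>\<^bsub>loc R W\<^esub> (y \<otimes>\<^bsub>loc R W\<^esub> z)"
    using c by (simp add: fracs loc_frac_simps) (rule loc_frac_eqI, auto simp: m_ac)
  show "\<one>\<^bsub>loc R W\<^esub> \<otimes>\<^bsub>loc R W\<^esub> x = x" using c by (simp add: fracs loc_frac_simps)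
qed (simp add: loc_frac_simps one_in_W)

lemma cring_loc: "cring (loc R W)"
proof (rule cringI[OF abelian_group_loc comm_monoid_loc])
  fix x y z assume "x \<in> carrier (loc R W)" "y \<in> carrier (loc R W)" "z \<in> carrier (loc R W)"
  then obtain a s b t c r where fracs: "x = loc_frac R W a s" "y = loc_frac R W b t" "z = loc_frac R W c r"
    and "a \<in> carrier R" "s \<in> W" "b \<in> carrier R" "t \<in> W" "c \<in> carrier R" "r \<in> W"
    by (metis loc_carrier_cases)
  note c = this(4-9) W_carrier one_in_W mult_in_W
  show "(x \<oplus>\<^bsub>loc R W\<^esub> y) \<otimes>\<^bsub>loc R W\<^esub> z = x \<otimes>\<^bsub>loc R W\<^esub> z \<oplus>\<^bsub>loc R W\<^esub> y \<otimes>\<^bsub>loc R W\<^esub> z"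
    using c by (simp add: fracs loc_frac_simps) (rule loc_frac_eqI, auto simp: m_ac a_ac l_distr r_distr)
qed

lemma loc_map_ring_hom: "loc_map R W \<in> ring_hom R (loc R W)"
  by (rule ring_hom_memI) (simp_all add: loc_map_def loc_frac_simps one_in_W)

lemma loc_frac_pow: "a \<in> carrier R \<Longrightarrow> s \<in> W \<Longrightarrow>
   loc_frac R W a s [^]\<^bsub>loc R W\<^esub> (n::nat) = loc_frac R W (a [^] n) (s [^] n)"
  by (induction n) (simp_all add: loc_frac_simps one_in_W W_carrier pow_in_W)

end

(* Since a/s = a s^(q-1) / s^q, Frobenius linearity forces pi(a/s) = pi(a s^(q-1)) / s. *)
definition loc_proj :: "('a, 'b) ring_scheme \<Rightarrow> 'a set \<Rightarrow> nat \<Rightarrow> ('a \<Rightarrow> 'a) \<Rightarrow> ('a \<times> 'a) set \<Rightarrow> ('a \<times> 'a) set"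
  where "loc_proj R W q \<pi> F =
    loc_frac R W (\<pi> (fst (SOME x. x \<in> F) \<otimes>\<^bsub>R\<^esub> snd (SOME x. x \<in> F) [^]\<^bsub>R\<^esub> (q - 1))) (snd (SOME x. x \<in> F))"

context localization
begin

context
  fixes q :: nat and \<pi> :: "'a \<Rightarrow> 'a"
  assumes linear: "frobenius_linear R q \<pi>" and q_pos: "0 < q"
begin

interpretation frobenius_linear R q \<pi> by (rule linear)

lemma pow_pred_mult: "h [^] (q - 1) \<otimes> h = h [^] q"
  using q_pos by (metis Suc_diff_1 nat_pow_Suc)

lemma frob_linear_pow_pred: "h \<in> carrier R \<Longrightarrow> c \<in> carrier R \<Longrightarrow> \<pi> (h [^] (q - 1) \<otimes> h \<otimes> c) = h \<otimes> \<pi> c"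
  using pow_mult[of h c] pow_pred_mult[of h] by simp

lemma loc_rel_proj:
  assumes "((a', s'), (a, s)) \<in> loc_rel R W"
  shows "((\<pi> (a' \<otimes> s' [^] (q - 1)), s'), (\<pi> (a \<otimes> s [^] (q - 1)), s)) \<in> loc_rel R W"
proof -
  from assms obtain u where u: "u \<in> W" "u \<otimes> (s \<otimes> a') = u \<otimes> (s' \<otimes> a)"
      and c: "a' \<in> carrier R" "s' \<in> W" "a \<in> carrier R" "s \<in> W"
    by (auto simp: loc_rel_iff)
  note cc = c W_carrier[OF c(2)] W_carrier[OF c(4)] W_carrier[OF u(1)]
  let ?k = "q - 1"
  have "(u \<otimes> s) [^] ?k \<otimes> (u \<otimes> s) \<otimes> (a' \<otimes> s' [^] ?k) = ((u \<otimes> s) [^] ?k \<otimes> s' [^] ?k) \<otimes> (u \<otimes> (s \<otimes> a'))"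
    using cc by (simp add: m_ac)
  also have "\<dots> = ((u \<otimes> s') [^] ?k \<otimes> s [^] ?k) \<otimes> (u \<otimes> (s' \<otimes> a))"
    using u cc by (simp add: pow_mult_distrib m_ac)
  also have "\<dots> = (u \<otimes> s') [^] ?k \<otimes> (u \<otimes> s') \<otimes> (a \<otimes> s [^] ?k)" using cc by (simp add: m_ac)
  finally have "(u \<otimes> s) \<otimes> \<pi> (a' \<otimes> s' [^] ?k) = (u \<otimes> s') \<otimes> \<pi> (a \<otimes> s [^] ?k)"
    using cc by (metis frob_linear_pow_pred m_closed nat_pow_closed)
  hence "u \<otimes> (s \<otimes> \<pi> (a' \<otimes> s' [^] ?k)) = u \<otimes> (s' \<otimes> \<pi> (a \<otimes> s [^] ?k))"
    using cc closed by (simp add: m_assoc)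
  thus ?thesis using c u cc closed by (auto simp: loc_rel_iff)
qed

lemma loc_proj_frac:
  "a \<in> carrier R \<Longrightarrow> s \<in> W \<Longrightarrow> loc_proj R W q \<pi> (loc_frac R W a s) = loc_frac R W (\<pi> (a \<otimes> s [^] (q - 1))) s"
  unfolding loc_proj_def
  using loc_rel_proj[OF loc_rel_some_rep] W_carrier closed by (subst loc_frac_eq_iff) (auto simp: loc_rel_def)

lemma loc_proj_loc_map: "a \<in> carrier R \<Longrightarrow> loc_proj R W q \<pi> (loc_map R W a) = loc_map R W (\<pi> a)"
  unfolding loc_map_def using one_in_W by (simp add: loc_proj_frac)

lemma loc_proj_closed: "F \<in> carrier (loc R W) \<Longrightarrow> loc_proj R W q \<pi> F \<in> carrier (loc R W)"
  by (erule loc_carrier_cases) (simp add: loc_proj_frac loc_frac_in_carrier closed W_carrier)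

lemma loc_proj_add:
  assumes "F \<in> carrier (loc R W)" "G \<in> carrier (loc R W)"
  shows "loc_proj R W q \<pi> (F \<oplus>\<^bsub>loc R W\<^esub> G) = loc_proj R W q \<pi> F \<oplus>\<^bsub>loc R W\<^esub> loc_proj R W q \<pi> G"
proof -
  obtain a s b t where fracs: "F = loc_frac R W a s" "G = loc_frac R W b t"
    and "a \<in> carrier R" "s \<in> W" "b \<in> carrier R" "t \<in> W"
    using assms by (metis loc_carrier_cases)
  note cc = this(3-6) W_carrier mult_in_W pow_in_W closed
  let ?k = "q - 1"
  have "\<pi> ((a \<otimes> t \<oplus> b \<otimes> s) \<otimes> (s \<otimes> t) [^] ?k)
      = \<pi> (t [^] ?k \<otimes> t \<otimes> (a \<otimes> s [^] ?k) \<oplus> s [^] ?k \<otimes> s \<otimes> (b \<otimes> t [^] ?k))"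
    using cc by (simp add: pow_mult_distrib l_distr r_distr m_ac)
  also have "\<dots> = t \<otimes> \<pi> (a \<otimes> s [^] ?k) \<oplus> s \<otimes> \<pi> (b \<otimes> t [^] ?k)"
    using cc frob_linear_pow_pred[of t "a \<otimes> s [^] ?k"] frob_linear_pow_pred[of s "b \<otimes> t [^] ?k"]
    by (simp add: additive)
  also have "\<dots> = \<pi> (a \<otimes> s [^] ?k) \<otimes> t \<oplus> \<pi> (b \<otimes> t [^] ?k) \<otimes> s"
    using cc by (simp add: m_comm)
  finally show ?thesis using cc by (simp add: fracs loc_add_frac loc_proj_frac)
qed

lemma loc_proj_pow_mult:
  assumes "H \<in> carrier (loc R W)" "C \<in> carrier (loc R W)"
  shows "loc_proj R W q \<pi> (H [^]\<^bsub>loc R W\<^esub> q \<otimes>\<^bsub>loc R W\<^esub> C) = H \<otimes>\<^bsub>loc R W\<^esub> loc_proj R W q \<pi> C"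
proof -
  obtain h w c r where fracs: "H = loc_frac R W h w" "C = loc_frac R W c r"
    and "h \<in> carrier R" "w \<in> W" "c \<in> carrier R" "r \<in> W"
    using assms by (metis loc_carrier_cases)
  note cc = this(3-6) W_carrier mult_in_W pow_in_W closed
  let ?k = "q - 1"
  have "\<pi> ((h [^] q \<otimes> c) \<otimes> (w [^] q \<otimes> r) [^] ?k) = \<pi> ((h \<otimes> w [^] ?k) [^] q \<otimes> (c \<otimes> r [^] ?k))"
    using cc by (simp add: pow_mult_distrib nat_pow_pow m_ac mult.commute)
  also have "\<dots> = (h \<otimes> w [^] ?k) \<otimes> \<pi> (c \<otimes> r [^] ?k)" using cc by (simp add: pow_mult)
  finally have "loc_proj R W q \<pi> (H [^]\<^bsub>loc R W\<^esub> q \<otimes>\<^bsub>loc R W\<^esub> C)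
      = loc_frac R W ((h \<otimes> w [^] ?k) \<otimes> \<pi> (c \<otimes> r [^] ?k)) (w [^] q \<otimes> r)"
    using cc by (simp add: fracs loc_frac_pow loc_mult_frac loc_proj_frac)
  also have "\<dots> = loc_frac R W (h \<otimes> \<pi> (c \<otimes> r [^] ?k)) (w \<otimes> r)"
    using cc by (intro loc_frac_eqI) (auto simp: m_ac simp flip: pow_pred_mult)
  also have "\<dots> = H \<otimes>\<^bsub>loc R W\<^esub> loc_proj R W q \<pi> C"
    using cc by (simp add: fracs loc_mult_frac loc_proj_frac)
  finally show ?thesis .
qed

lemma frobenius_linear_loc_proj: "frobenius_linear (loc R W) q (loc_proj R W q \<pi>)"
  by (intro frobenius_linear.intro frobenius_linear_axioms.intro cring_loc loc_proj_closed loc_proj_add loc_proj_pow_mult)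

end

end

lemma (in frobenius_splitting) ideal_tilde_loc_ext_ideal:
  assumes W: "multiplicative_set R W" and A: "A \<subseteq> carrier R" and q: "q = p ^ e" "0 < q"
  shows "ideal_tilde (loc R W) p e (ext_ideal (loc R W) (loc_map R W) A)
    = ext_ideal (loc R W) (loc_map R W) (ideal_tilde R p e A)"
proof -
  interpret localization R W by (intro localization.intro localization_axioms.intro is_cring W)
  show ?thesis
    by (rule ideal_tilde_ext_ideal[OF cring_loc loc_map_ring_hom _ _ A q(1), where \<pi>' = "\<lambda>i. loc_proj R W q (\<pi> i)"])
       (simp_all add: frobenius_linear_loc_proj[OF linear q(2)] loc_proj_loc_map[OF linear q(2)])
qed

section \<open>Polynomials and power series\<close>

alias lookup = Poly_Mapping.lookup
alias keys = Poly_Mapping.keys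

type_synonym monomial = "nat \<Rightarrow>\<^sub>0 nat"

definition antidiagonal :: "monomial \<Rightarrow> (monomial \<times> monomial) set" where
  "antidiagonal m = {(a, b). a + b = m}"

lemma monomial_eq_iff: "(a::monomial) = b \<longleftrightarrow> (\<forall>i. lookup a i = lookup b i)"
  by (auto intro: poly_mapping_eqI)

lemma finite_lookup_le: "finite {a :: monomial. lookup a \<le> lookup m}"
proof -
  let ?f = "\<lambda>a. restrict (lookup a) (keys m)"
  have "inj_on ?f {a. lookup a \<le> lookup m}"
  proof (rule inj_onI, rule poly_mapping_eqI)
    fix a b i assume a: "a \<in> {a. lookup a \<le> lookup m}" and b: "b \<in> {a. lookup a \<le> lookup m}"
      and e: "?f a = ?f b"
    show "lookup a i = lookup b i"
    proof (cases "i \<in> keys m")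
      case True thus ?thesis using e by (metis restrict_apply')
    next
      case False
      hence "lookup m i = 0" by (simp add: in_keys_iff)
      thus ?thesis using a b by (auto simp: le_fun_def intro: le_antisym) (metis le_zero_eq)
    qed
  qed
  moreover have "?f ` {a. lookup a \<le> lookup m} \<subseteq> PiE (keys m) (\<lambda>i. {..lookup m i})"
    by (auto simp: le_fun_def)
  hence "finite (?f ` {a. lookup a \<le> lookup m})" by (rule finite_subset) (simp add: finite_PiE)
  ultimately show ?thesis using finite_image_iff by blast
qed

lemma antidiagonal_le: "(a, b) \<in> antidiagonal m \<Longrightarrow> lookup a \<le> lookup m \<and> lookup b \<le> lookup m"
  unfolding antidiagonal_def by (auto simp: le_fun_def lookup_add)

lemma finite_antidiagonal: "finite (antidiagonal m)"
proof (rule finite_subset)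
  show "antidiagonal m \<subseteq> {a. lookup a \<le> lookup m} \<times> {a. lookup a \<le> lookup m}"
    using antidiagonal_le by auto
qed (simp add: finite_lookup_le)

lemma mpoly_carrier_iff: "P \<in> carrier (mpoly_ring n) \<longleftrightarrow> (\<forall>m\<in>keys P. keys m \<subseteq> {..<n})"
  by (simp add: mpoly_ring_def)

lemma mpoly_ring_simps [simp]:
  "(\<otimes>\<^bsub>mpoly_ring n\<^esub>) = (*)" "(\<oplus>\<^bsub>mpoly_ring n\<^esub>) = (+)" "\<one>\<^bsub>mpoly_ring n\<^esub> = 1" "\<zero>\<^bsub>mpoly_ring n\<^esub> = 0"
  by (simp_all add: mpoly_ring_def)

lemma mpoly_add_closed: "P \<in> carrier (mpoly_ring n) \<Longrightarrow> Q \<in> carrier (mpoly_ring n) \<Longrightarrow> P + Q \<in> carrier (mpoly_ring n)"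
  unfolding mpoly_carrier_iff using keys_add[of P Q] by blast

lemma mpoly_uminus_closed: "P \<in> carrier (mpoly_ring n) \<Longrightarrow> - P \<in> carrier (mpoly_ring n)"
  unfolding mpoly_carrier_iff by (simp add: in_keys_iff)

lemma mpoly_mult_closed:
  fixes P Q :: "monomial \<Rightarrow>\<^sub>0 'k::field"
  assumes "P \<in> carrier (mpoly_ring n)" "Q \<in> carrier (mpoly_ring n)"
  shows "P * Q \<in> carrier (mpoly_ring n)"
  unfolding mpoly_carrier_iff
proof
  fix m assume "m \<in> keys (P * Q)"
  then obtain a b where "m = a + b" "a \<in> keys P" "b \<in> keys Q" using keys_mult[of P Q] by blast
  thus "keys m \<subseteq> {..<n}" using assms keys_add[of a b] unfolding mpoly_carrier_iff by blast
qed

lemma cring_mpoly_ring: "cring (mpoly_ring n)"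
proof (rule cringI)
  have "0 \<in> carrier (mpoly_ring n)" "1 \<in> carrier (mpoly_ring n)" by (simp_all add: mpoly_carrier_iff)
  thus "abelian_group (mpoly_ring n)" "comm_monoid (mpoly_ring n)"
    by (auto intro!: abelian_groupI comm_monoidI bexI[of _ "- _"]
        simp: mpoly_add_closed mpoly_uminus_closed mpoly_mult_closed add_ac mult_ac)
qed (simp add: distrib_right)

lemma mpoly_pow [simp]: "x [^]\<^bsub>mpoly_ring n\<^esub> (k::nat) = x ^ k"
  by (induction k) (simp_all add: mpoly_ring_def)

lemma ps_carrier_iff: "f \<in> carrier (ps_ring n) \<longleftrightarrow> (\<forall>m. \<not> keys m \<subseteq> {..<n} \<longrightarrow> f m = 0)"
  by (simp add: ps_ring_def)

lemma ps_ring_simps [simp]: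
  "(\<otimes>\<^bsub>ps_ring n\<^esub>) = ps_mult" "(\<oplus>\<^bsub>ps_ring n\<^esub>) = (\<lambda>f g m. f m + g m)"
  "\<one>\<^bsub>ps_ring n\<^esub> = (\<lambda>m. if m = 0 then 1 else 0)" "\<zero>\<^bsub>ps_ring n\<^esub> = (\<lambda>_. 0)"
  by (simp_all add: ps_ring_def)

lemma ps_mult_antidiagonal: "ps_mult f g m = (\<Sum>(a, b) \<in> antidiagonal m. f a * g b)"
  by (simp add: ps_mult_def antidiagonal_def)

lemma ps_mult_comm: "ps_mult f g = ps_mult g f"
proof
  fix m
  have "(\<Sum>(a, b) \<in> antidiagonal m. f a * g b) = (\<Sum>(a, b) \<in> antidiagonal m. g a * f b)"
    by (rule sum.reindex_bij_witness[of _ "\<lambda>(a,b). (b,a)" "\<lambda>(a,b). (b,a)"])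
       (auto simp: antidiagonal_def add.commute mult.commute)
  thus "ps_mult f g m = ps_mult g f m" by (simp add: ps_mult_antidiagonal)
qed

lemma ps_mult_one: "ps_mult (\<lambda>m. if m = 0 then 1 else 0) f = f"
proof
  fix m :: monomial
  have "(\<Sum>x \<in> antidiagonal m. (if fst x = 0 then 1 else 0) * f (snd x))
      = (\<Sum>x \<in> {(0::monomial, m)}. (if fst x = 0 then 1 else 0) * f (snd x))"
    by (rule sum.mono_neutral_right[OF finite_antidiagonal]) (auto simp: antidiagonal_def split_def)
  thus "ps_mult (\<lambda>m. if m = 0 then 1 else 0) f m = f m" by (simp add: ps_mult_antidiagonal split_def)
qed

lemma ps_mult_distrib: "ps_mult (\<lambda>m. f m + g m) h = (\<lambda>m. ps_mult f h m + ps_mult g h m)"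
  by (rule ext) (simp add: ps_mult_antidiagonal distrib_right sum.distrib split_def)

lemma ps_mult_assoc: "ps_mult (ps_mult f g) h = ps_mult f (ps_mult g h)"
proof
  fix m :: monomial
  have "ps_mult (ps_mult f g) h m
      = (\<Sum>x \<in> antidiagonal m. \<Sum>y \<in> antidiagonal (fst x). f (fst y) * g (snd y) * h (snd x))"
    by (simp add: ps_mult_antidiagonal sum_distrib_right split_def)
  also have "\<dots> = (\<Sum>z \<in> Sigma (antidiagonal m) (\<lambda>x. antidiagonal (fst x)).
      f (fst (snd z)) * g (snd (snd z)) * h (snd (fst z)))"
    by (subst sum.Sigma) (auto simp: finite_antidiagonal split_def)
  also have "\<dots> = (\<Sum>z \<in> Sigma (antidiagonal m) (\<lambda>x. antidiagonal (snd x)).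
      f (fst (fst z)) * (g (fst (snd z)) * h (snd (snd z))))"
    by (rule sum.reindex_bij_witness[of _ "\<lambda>z. ((fst (fst z) + fst (snd z), snd (snd z)), (fst (fst z), fst (snd z)))"
          "\<lambda>z. ((fst (snd z), snd (snd z) + snd (fst z)), (snd (snd z), snd (fst z)))"])
       (auto simp: antidiagonal_def add.assoc mult.assoc)
  also have "\<dots> = (\<Sum>x \<in> antidiagonal m. \<Sum>y \<in> antidiagonal (snd x). f (fst x) * (g (fst y) * h (snd y)))"
    by (subst sum.Sigma) (auto simp: finite_antidiagonal split_def)
  also have "\<dots> = ps_mult f (ps_mult g h) m"
    by (simp add: ps_mult_antidiagonal sum_distrib_left split_def)
  finally show "ps_mult (ps_mult f g) h m = ps_mult f (ps_mult g h) m" .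
qed

lemma ps_mult_closed:
  assumes f: "f \<in> carrier (ps_ring n)" and g: "g \<in> carrier (ps_ring n)"
  shows "ps_mult f g \<in> carrier (ps_ring n)"
  unfolding ps_carrier_iff
proof (intro allI impI)
  fix m :: monomial assume m: "\<not> keys m \<subseteq> {..<n}"
  have "f a * g b = 0" if "(a, b) \<in> antidiagonal m" for a b
  proof -
    have "keys m \<subseteq> keys a \<union> keys b" using that keys_add[of a b] by (auto simp: antidiagonal_def)
    thus ?thesis using f g m by (auto simp: ps_carrier_iff)
  qed
  thus "ps_mult f g m = 0" unfolding ps_mult_antidiagonal by (intro sum.neutral) auto
qed

lemma cring_ps_ring: "cring (ps_ring n)"
proof (rule cringI)
  show "abelian_group (ps_ring n)"
    by (rule abelian_groupI) (auto simp: ps_carrier_iff add_ac intro!: bexI[of _ "\<lambda>m. - _ m"])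
  show "comm_monoid (ps_ring n)"
  proof (rule comm_monoidI)
    show "\<one>\<^bsub>ps_ring n\<^esub> \<in> carrier (ps_ring n)" by (auto simp: ps_carrier_iff)
  qed (auto simp: ps_mult_closed ps_mult_one ps_mult_assoc intro: ps_mult_comm)
qed (simp add: ps_mult_distrib)

lemma lookup_times_antidiagonal:
  fixes P Q :: "monomial \<Rightarrow>\<^sub>0 'k::comm_semiring_1"
  shows "lookup (P * Q) m = (\<Sum>(a, b)\<in>antidiagonal m. lookup P a * lookup Q b)"
proof -
  let ?g = "\<lambda>l r. if m = l + r then lookup P l * lookup Q r else 0"
  have fin: "finite {r. (if m = l + r then lookup Q r else 0) \<noteq> 0}" for l
    by (rule finite_subset[of _ "snd ` antidiagonal m"])
       (auto simp: finite_antidiagonal, auto simp: antidiagonal_def image_iff)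
  have "lookup (P * Q) m = Sum_any (\<lambda>l. Sum_any (\<lambda>r. ?g l r))"
    unfolding lookup_mult when_def
    by (subst Sum_any_right_distrib[OF fin]) (auto intro!: Sum_any.cong)
  also have "\<dots> = (\<Sum>(l, r). ?g l r)"
    by (rule Sum_any.cartesian_product[of "fst ` antidiagonal m \<times> snd ` antidiagonal m"])
       (auto simp: finite_antidiagonal, auto simp: antidiagonal_def image_iff split: if_splits)
  also have "\<dots> = (\<Sum>(l, r)\<in>antidiagonal m. ?g l r)"
    by (rule Sum_any.expand_superset)
       (auto simp: finite_antidiagonal, auto simp: antidiagonal_def split: if_splits)
  also have "\<dots> = (\<Sum>(a, b)\<in>antidiagonal m. lookup P a * lookup Q b)"
    by (rule sum.cong) (auto simp: antidiagonal_def)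
  finally show ?thesis .
qed

lemma mpoly_to_ps_mult: "mpoly_to_ps (P * Q) = ps_mult (mpoly_to_ps P) (mpoly_to_ps Q)"
  by (rule ext) (simp add: mpoly_to_ps_def ps_mult_antidiagonal lookup_times_antidiagonal)

lemma mpoly_to_ps_carrier: "P \<in> carrier (mpoly_ring n) \<Longrightarrow> mpoly_to_ps P \<in> carrier (ps_ring n)"
  unfolding mpoly_carrier_iff ps_carrier_iff mpoly_to_ps_def by (auto simp: in_keys_iff)

lemma mpoly_to_ps_ring_hom: "mpoly_to_ps \<in> ring_hom (mpoly_ring n) (ps_ring n)"
  by (rule ring_hom_memI)
     (auto simp: mpoly_to_ps_carrier[unfolded mpoly_to_ps_def] mpoly_to_ps_mult[unfolded mpoly_to_ps_def]
        lookup_add lookup_one when_def mpoly_to_ps_def)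

lemma inj_mpoly_to_ps: "inj mpoly_to_ps"
  by (simp add: inj_def mpoly_to_ps_def poly_mapping_eqI)

lemma mpoly_to_ps_pow: "mpoly_to_ps P [^]\<^bsub>ps_ring n\<^esub> (k::nat) = mpoly_to_ps (P ^ k)"
  by (induction k) (auto simp: mpoly_to_ps_def lookup_one when_def mpoly_to_ps_mult[unfolded mpoly_to_ps_def] mult.commute ps_mult_comm)

section \<open>Frobenius powers of polynomials and power series\<close>

definition monomial_scale :: "nat \<Rightarrow> monomial \<Rightarrow> monomial" where
  "monomial_scale q g = Poly_Mapping.map ((*) q) g"

definition monomial_div :: "nat \<Rightarrow> monomial \<Rightarrow> monomial" where
  "monomial_div q m = Poly_Mapping.map (\<lambda>k. k div q) m"

definition monomial_mod :: "nat \<Rightarrow> monomial \<Rightarrow> monomial" where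
  "monomial_mod q m = Poly_Mapping.map (\<lambda>k. k mod q) m"

lemma lookup_monomial_scale [simp]: "lookup (monomial_scale q g) i = q * lookup g i"
  and lookup_monomial_div [simp]: "lookup (monomial_div q m) i = lookup m i div q"
  and lookup_monomial_mod [simp]: "lookup (monomial_mod q m) i = lookup m i mod q"
  by (simp_all add: monomial_scale_def monomial_div_def monomial_mod_def map.rep_eq when_def)

lemma monomial_scale_Suc: "monomial_scale (Suc q) g = g + monomial_scale q g"
  by (simp add: monomial_eq_iff lookup_add)

lemma monomial_scale_0 [simp]: "monomial_scale 0 g = 0"
  by (simp add: monomial_eq_iff)

lemma monomial_scale_add: "monomial_scale q (a + b) = monomial_scale q a + monomial_scale q b"
  by (simp add: monomial_eq_iff lookup_add algebra_simps)

lemma monomial_scale_inj: "0 < q \<Longrightarrow> monomial_scale q a = monomial_scale q b \<Longrightarrow> a = b"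
  by (simp add: monomial_eq_iff)

lemma monomial_div_mod: "monomial_scale q (monomial_div q m) + monomial_mod q m = m"
  by (simp add: monomial_eq_iff lookup_add)

lemma monomial_mod_unique:
  assumes "\<And>j. lookup a j < q" "m = monomial_scale q g + a"
  shows "a = monomial_mod q m \<and> g = monomial_div q m"
proof -
  have "q \<noteq> 0" using assms(1)[of 0] by auto
  thus ?thesis using assms by (simp add: monomial_eq_iff lookup_add)
qed

lemma keys_subset_monomial_scale_add: "0 < q \<Longrightarrow> keys g \<subseteq> keys (monomial_scale q g + a)"
  by (auto simp: in_keys_iff lookup_add)

lemma antidiagonal_monomial_scale_add:
  assumes a: "\<And>j. lookup a j < q" and ud: "monomial_scale q w + d = monomial_scale q g + a"
  shows "(w, g - w) \<in> antidiagonal g \<and> d = monomial_scale q (g - w) + a"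
proof -
  have "lookup w j \<le> lookup g j \<and> lookup d j = q * (lookup g j - lookup w j) + lookup a j" for j
  proof -
    have eq: "q * lookup w j + lookup d j = q * lookup g j + lookup a j"
      using ud by (simp add: monomial_eq_iff lookup_add)
    have "lookup w j \<le> lookup g j"
    proof (rule ccontr)
      assume "\<not> lookup w j \<le> lookup g j"
      hence "q * Suc (lookup g j) \<le> q * lookup w j" by (intro mult_le_mono2) simp
      thus False using eq a[of j] by simp
    qed
    thus ?thesis using eq by (simp add: diff_mult_distrib2)
  qed
  thus ?thesis by (auto simp: antidiagonal_def monomial_eq_iff lookup_add lookup_minus)
qed

lemma single_pow: "Poly_Mapping.single b (c::'k::comm_semiring_1) ^ k = Poly_Mapping.single (monomial_scale k b) (c ^ k)"
  by (induction k) (simp_all add: mult_single monomial_scale_Suc)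

lemma sum_single_keys: "(\<Sum>b\<in>keys P. Poly_Mapping.single b (lookup P b)) = P"
  by (rule poly_mapping_eqI) (simp add: lookup_sum lookup_single when_def in_keys_iff)

lemma CHAR_poly_mapping: "CHAR(monomial \<Rightarrow>\<^sub>0 'k::comm_semiring_1) = CHAR('k)"
proof (rule CHAR_eqI)
  have e: "(of_nat x :: monomial \<Rightarrow>\<^sub>0 'k) = 0 \<longleftrightarrow> (of_nat x :: 'k) = 0" for x
  proof
    assume "(of_nat x :: monomial \<Rightarrow>\<^sub>0 'k) = 0"
    hence "lookup (of_nat x :: monomial \<Rightarrow>\<^sub>0 'k) 0 = 0" by simp
    thus "(of_nat x :: 'k) = 0" by (simp add: lookup_of_nat when_def)
  next
    assume "(of_nat x :: 'k) = 0"
    thus "(of_nat x :: monomial \<Rightarrow>\<^sub>0 'k) = 0" by (metis single_of_nat single_zero)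
  qed
  show "(of_nat CHAR('k) :: monomial \<Rightarrow>\<^sub>0 'k) = 0" using e by simp
  show "CHAR('k) dvd x" if "(of_nat x :: monomial \<Rightarrow>\<^sub>0 'k) = 0" for x
    using that e of_nat_eq_0_iff_char_dvd by blast
qed

lemma lookup_pow_char:
  fixes P :: "monomial \<Rightarrow>\<^sub>0 'k::field"
  assumes "Factorial_Ring.prime CHAR('k)" "q = CHAR('k) ^ e"
  shows "lookup (P ^ q) m = (\<Sum>b\<in>keys P. if monomial_scale q b = m then lookup P b ^ q else 0)"
proof -
  have "P ^ q = (\<Sum>b\<in>keys P. Poly_Mapping.single b (lookup P b)) ^ q" by (simp add: sum_single_keys)
  also have "\<dots> = (\<Sum>b\<in>keys P. Poly_Mapping.single b (lookup P b) ^ q)"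
    using assms by (intro freshmans_dream_sum') (simp_all add: CHAR_poly_mapping)
  finally show ?thesis by (simp add: single_pow lookup_sum lookup_single when_def)
qed

lemma lookup_pow_char_scale:
  fixes P :: "monomial \<Rightarrow>\<^sub>0 'k::field"
  assumes "Factorial_Ring.prime CHAR('k)" "q = CHAR('k) ^ e"
  shows "lookup (P ^ q) (monomial_scale q g) = lookup P g ^ q"
proof -
  have q: "0 < q" using assms prime_gt_0_nat by simp
  have "lookup (P ^ q) (monomial_scale q g) = (\<Sum>b\<in>keys P. if b = g then lookup P b ^ q else 0)"
    unfolding lookup_pow_char[OF assms] using monomial_scale_inj[OF q] by (intro sum.cong) auto
  also have "\<dots> = lookup P g ^ q" using q by (simp add: in_keys_iff)
  finally show ?thesis .
qed

lemma lookup_pow_char_not_scale: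
  fixes P :: "monomial \<Rightarrow>\<^sub>0 'k::field"
  assumes "Factorial_Ring.prime CHAR('k)" "q = CHAR('k) ^ e" and "m \<notin> range (monomial_scale q)"
  shows "lookup (P ^ q) m = 0"
  using assms by (auto simp: lookup_pow_char intro!: sum.neutral)

definition truncate :: "monomial \<Rightarrow> (monomial \<Rightarrow> 'k::zero) \<Rightarrow> (monomial \<Rightarrow>\<^sub>0 'k)" where
  "truncate m h = Abs_poly_mapping (\<lambda>a. if lookup a \<le> lookup m then h a else 0)"

lemma lookup_truncate: "lookup (truncate m h) a = (if lookup a \<le> lookup m then h a else 0)"
proof -
  have "finite {a. (if lookup a \<le> lookup m then h a else 0) \<noteq> 0}"
    by (rule finite_subset[OF _ finite_lookup_le[of m]]) auto
  thus ?thesis unfolding truncate_def by simp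
qed

lemma ps_mult_cong_below:
  assumes "\<And>a. lookup a \<le> lookup m \<Longrightarrow> f a = f' a" "\<And>a. lookup a \<le> lookup m \<Longrightarrow> g a = g' a"
  shows "ps_mult f g m = ps_mult f' g' m"
  unfolding ps_mult_antidiagonal using assms antidiagonal_le by (intro sum.cong) auto

lemma ps_pow_cong_below:
  assumes "\<And>a. lookup a \<le> lookup m \<Longrightarrow> f a = f' a" "lookup b \<le> lookup m"
  shows "(f [^]\<^bsub>ps_ring n\<^esub> (k::nat)) b = (f' [^]\<^bsub>ps_ring n\<^esub> k) b"
  using assms(2)
proof (induction k arbitrary: b)
  case (Suc k)
  show ?case unfolding nat_pow_Suc ps_ring_simps
    by (rule ps_mult_cong_below) (use Suc assms(1) order_trans in blast)+
qed simp

lemma ps_pow_char: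
  fixes h :: "monomial \<Rightarrow> 'k::field"
  assumes "Factorial_Ring.prime CHAR('k)" "q = CHAR('k) ^ e"
  shows "(h [^]\<^bsub>ps_ring n\<^esub> q) (monomial_scale q g) = h g ^ q"
    and "m \<notin> range (monomial_scale q) \<Longrightarrow> (h [^]\<^bsub>ps_ring n\<^esub> q) m = 0"
proof -
  (* The coefficient of x^m in h^q only involves coefficients of h below m, i.e. a polynomial. *)
  have trunc: "(h [^]\<^bsub>ps_ring n\<^esub> q) m = lookup (truncate m h ^ q) m" for m
    using ps_pow_cong_below[of m h "mpoly_to_ps (truncate m h)" m n q]
    by (simp add: mpoly_to_ps_pow) (simp add: mpoly_to_ps_def lookup_truncate)
  have "0 < q" using assms prime_gt_0_nat by simp
  hence "lookup g \<le> lookup (monomial_scale q g)" by (simp add: le_fun_def)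
  thus "(h [^]\<^bsub>ps_ring n\<^esub> q) (monomial_scale q g) = h g ^ q"
    by (simp add: trunc lookup_pow_char_scale[OF assms] lookup_truncate)
  show "m \<notin> range (monomial_scale q) \<Longrightarrow> (h [^]\<^bsub>ps_ring n\<^esub> q) m = 0"
    by (simp add: trunc lookup_pow_char_not_scale[OF assms])
qed

section \<open>Coefficient projections\<close>

(* B is a basis of K over its subfield K^q; rep b v is the q-th root of the b-coordinate of v. *)
locale frobenius_basis =
  fixes q e :: nat and B :: "'k::field set" and rep :: "'k \<Rightarrow> 'k \<Rightarrow> 'k"
  assumes prime_char: "Factorial_Ring.prime CHAR('k)" and q_def: "q = CHAR('k) ^ e"
    and rep_add: "b \<in> B \<Longrightarrow> rep b (x + y) = rep b x + rep b y"
    and rep_pow_mult: "b \<in> B \<Longrightarrow> rep b (c ^ q * v) = c * rep b v"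
    and rep_span: "finite V \<Longrightarrow> \<exists>B0 \<subseteq> B. finite B0 \<and> (\<forall>v\<in>V. v = (\<Sum>b\<in>B0. rep b v ^ q * b))"
begin

lemma q_pos: "0 < q"
  using prime_char q_def prime_gt_0_nat by simp

lemma rep_zero: "b \<in> B \<Longrightarrow> rep b 0 = 0"
  using rep_add[of b 0 0] by (metis add_cancel_right_right)

lemma rep_sum: "b \<in> B \<Longrightarrow> rep b (sum f S) = (\<Sum>x\<in>S. rep b (f x))"
  by (induction S rule: infinite_finite_induct) (auto simp: rep_zero rep_add)

definition proj_index :: "('k \<times> monomial) set" where
  "proj_index = {(b, a). b \<in> B \<and> (\<forall>j. lookup a j < q)}"

(* ps_proj (b, a) f is the q-th root of the coefficient of b x^a in the expansion of f over the
   basis {b x^a} of K[[x]] over K[[x]]^q, so that f = sum of b x^a (ps_proj (b, a) f)^q. *)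
definition ps_proj :: "'k \<times> monomial \<Rightarrow> (monomial \<Rightarrow> 'k) \<Rightarrow> (monomial \<Rightarrow> 'k)" where
  "ps_proj i f = (\<lambda>g. rep (fst i) (f (monomial_scale q g + snd i)))"

definition mpoly_proj :: "'k \<times> monomial \<Rightarrow> (monomial \<Rightarrow>\<^sub>0 'k) \<Rightarrow> (monomial \<Rightarrow>\<^sub>0 'k)" where
  "mpoly_proj i P = Abs_poly_mapping (ps_proj i (lookup P))"

lemma ps_proj_carrier:
  assumes i: "i \<in> proj_index" and f: "f \<in> carrier (ps_ring n)"
  shows "ps_proj i f \<in> carrier (ps_ring n)"
  unfolding ps_carrier_iff
proof (intro allI impI)
  fix g :: monomial assume "\<not> keys g \<subseteq> {..<n}"
  hence "f (monomial_scale q g + snd i) = 0"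
    using f keys_subset_monomial_scale_add[OF q_pos] unfolding ps_carrier_iff by blast
  thus "ps_proj i f g = 0" using i by (auto simp: ps_proj_def rep_zero proj_index_def)
qed

lemma ps_proj_pow_mult:
  assumes i: "i \<in> proj_index"
  shows "ps_proj i (ps_mult (h [^]\<^bsub>ps_ring n\<^esub> q) c) = ps_mult h (ps_proj i c)"
proof
  fix g :: monomial
  obtain b a where ba: "i = (b, a)" "b \<in> B" "\<And>j. lookup a j < q" using i unfolding proj_index_def by auto
  let ?G = "\<lambda>x. rep b ((h [^]\<^bsub>ps_ring n\<^esub> q) (fst x) * c (snd x))"
  let ?lift = "\<lambda>y. (monomial_scale q (fst y), monomial_scale q (snd y) + a)"
  have "ps_proj i (ps_mult (h [^]\<^bsub>ps_ring n\<^esub> q) c) g = (\<Sum>x\<in>antidiagonal (monomial_scale q g + a). ?G x)"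
    using ba by (simp add: ps_proj_def ps_mult_antidiagonal rep_sum split_def)
  (* h^q is supported on the exponents q g', so only the splittings lifted from those of g remain. *)
  also have "\<dots> = (\<Sum>x\<in>?lift ` antidiagonal g. ?G x)"
  proof (rule sum.mono_neutral_right[OF finite_antidiagonal])
    show "?lift ` antidiagonal g \<subseteq> antidiagonal (monomial_scale q g + a)"
      by (auto simp: antidiagonal_def monomial_scale_add add_ac)
    have "fst x \<notin> range (monomial_scale q)"
      if "x \<in> antidiagonal (monomial_scale q g + a) - ?lift ` antidiagonal g" for x
      using that antidiagonal_monomial_scale_add[OF ba(3)]
      by (auto simp: antidiagonal_def image_iff) metis
    thus "\<forall>x\<in>antidiagonal (monomial_scale q g + a) - ?lift ` antidiagonal g. ?G x = 0"
      using ps_pow_char(2)[OF prime_char q_def] ba by (simp add: rep_zero)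
  qed
  also have "\<dots> = (\<Sum>y\<in>antidiagonal g. ?G (?lift y))"
    by (subst sum.reindex) (auto simp: inj_on_def dest: monomial_scale_inj[OF q_pos])
  also have "\<dots> = (\<Sum>y\<in>antidiagonal g. h (fst y) * ps_proj i c (snd y))"
    using ba by (intro sum.cong) (auto simp: ps_pow_char(1)[OF prime_char q_def] rep_pow_mult ps_proj_def)
  also have "\<dots> = ps_mult h (ps_proj i c) g" by (simp add: ps_mult_antidiagonal split_def)
  finally show "ps_proj i (ps_mult (h [^]\<^bsub>ps_ring n\<^esub> q) c) g = ps_mult h (ps_proj i c) g" .
qed

lemma frobenius_linear_ps_proj: "i \<in> proj_index \<Longrightarrow> frobenius_linear (ps_ring n) q (ps_proj i)"
  by (intro frobenius_linear.intro frobenius_linear_axioms.intro cring_ps_ring)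
     (auto simp: ps_proj_carrier ps_proj_pow_mult, auto simp: ps_proj_def proj_index_def rep_add)

lemma lookup_mpoly_proj: "i \<in> proj_index \<Longrightarrow> lookup (mpoly_proj i P) = ps_proj i (lookup P)"
proof -
  assume i: "i \<in> proj_index"
  have "{g. ps_proj i (lookup P) g \<noteq> 0} \<subseteq> (\<lambda>g. monomial_scale q g + snd i) -` keys P"
    using i by (auto simp: ps_proj_def proj_index_def in_keys_iff rep_zero)
  moreover have "finite ((\<lambda>g. monomial_scale q g + snd i) -` keys P)"
    by (rule finite_vimageI) (auto simp: inj_def dest: monomial_scale_inj[OF q_pos])
  ultimately show ?thesis unfolding mpoly_proj_def by (simp add: finite_subset)
qed

lemma ps_proj_mpoly_to_ps: "i \<in> proj_index \<Longrightarrow> ps_proj i (mpoly_to_ps P) = mpoly_to_ps (mpoly_proj i P)"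
  by (simp add: lookup_mpoly_proj mpoly_to_ps_def)

lemma mpoly_proj_carrier:
  assumes i: "i \<in> proj_index" and P: "P \<in> carrier (mpoly_ring n)"
  shows "mpoly_proj i P \<in> carrier (mpoly_ring n)"
  using ps_proj_carrier[OF i mpoly_to_ps_carrier[OF P]]
  by (auto simp: mpoly_carrier_iff ps_carrier_iff in_keys_iff lookup_mpoly_proj[OF i] mpoly_to_ps_def)

lemma frobenius_linear_mpoly_proj: "i \<in> proj_index \<Longrightarrow> frobenius_linear (mpoly_ring n) q (mpoly_proj i)"
  by (rule frobenius_linear_vimage[OF cring_mpoly_ring frobenius_linear_ps_proj mpoly_to_ps_ring_hom])
     (auto simp: inj_on_subset[OF inj_mpoly_to_ps] mpoly_proj_carrier ps_proj_mpoly_to_ps)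

end

lemma lookup_single_mult:
  fixes Q :: "monomial \<Rightarrow>\<^sub>0 'k::comm_semiring_1"
  shows "lookup (Poly_Mapping.single a c * Q) m = (if lookup a \<le> lookup m then c * lookup Q (m - a) else 0)"
proof -
  have "lookup (Poly_Mapping.single a c * Q) m = (\<Sum>(x, y)\<in>antidiagonal m. (c when x = a) * lookup Q y)"
    by (simp add: lookup_times_antidiagonal lookup_single eq_commute)
  also have "\<dots> = (if lookup a \<le> lookup m then c * lookup Q (m - a) else 0)"
  proof (cases "lookup a \<le> lookup m")
    case True
    have "(a, m - a) \<in> antidiagonal m"
      using True by (simp add: antidiagonal_def monomial_eq_iff lookup_add lookup_minus le_fun_def)
    hence "(\<Sum>(x, y)\<in>antidiagonal m. (c when x = a) * lookup Q y) = (\<Sum>(x, y)\<in>{(a, m - a)}. (c when x = a) * lookup Q y)"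
      by (intro sum.mono_neutral_right finite_antidiagonal) (auto simp: antidiagonal_def when_def split: if_splits)
    thus ?thesis using True by simp
  next
    case False
    hence "x \<noteq> a" if "(x, y) \<in> antidiagonal m" for x y
      using that antidiagonal_le by blast
    thus ?thesis using False by (auto intro!: sum.neutral)
  qed
  finally show ?thesis .
qed

lemma mpoly_sum_mem_ideal:
  assumes J: "ideal J (mpoly_ring n)" and f: "\<And>x. x \<in> S \<Longrightarrow> f x \<in> J"
  shows "sum f S \<in> J"
  using f
proof (induction S rule: infinite_finite_induct)
  case (insert x F)
  thus ?case using additive_subgroup.a_closed[OF ideal.axioms(1)[OF J], of "f x" "sum f F"] by simp
qed (use additive_subgroup.zero_closed[OF ideal.axioms(1)[OF J]] in simp_all)

context frobenius_basis
begin

lemma lookup_single_mult_pow_proj: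
  assumes i: "(b, a) \<in> proj_index"
  shows "lookup (Poly_Mapping.single a b * mpoly_proj (b, a) P ^ q) m
    = (if a = monomial_mod q m then b * rep b (lookup P m) ^ q else 0)"
proof (cases "a = monomial_mod q m")
  case True
  define g where "g = monomial_div q m"
  have m: "m = monomial_scale q g + a" using monomial_div_mod[of q m] True by (simp add: g_def)
  have "lookup a \<le> lookup m" "m - a = monomial_scale q g"
    unfolding m by (simp_all add: le_fun_def lookup_add)
  thus ?thesis unfolding if_P[OF True] using i m[symmetric]
    by (simp add: lookup_single_mult lookup_pow_char_scale[OF prime_char q_def] lookup_mpoly_proj ps_proj_def)
next
  case False
  have a: "\<And>j. lookup a j < q" using i by (simp add: proj_index_def)
  have "m - a \<notin> range (monomial_scale q)" if "lookup a \<le> lookup m"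
  proof
    assume "m - a \<in> range (monomial_scale q)"
    then obtain g where "m - a = monomial_scale q g" by blast
    hence "m = monomial_scale q g + a"
      using that by (simp add: monomial_eq_iff lookup_add lookup_minus le_fun_def) (metis le_add_diff_inverse2)
    thus False using False monomial_mod_unique[OF a] by blast
  qed
  thus ?thesis using False by (simp add: lookup_single_mult lookup_pow_char_not_scale[OF prime_char q_def])
qed

lemma mpoly_proj_decomposition:
  assumes B0: "B0 \<subseteq> B" "finite B0" "\<forall>v\<in>lookup P ` keys P. v = (\<Sum>b\<in>B0. rep b v ^ q * b)"
  shows "P = (\<Sum>(b, a)\<in>B0 \<times> monomial_mod q ` keys P. Poly_Mapping.single a b * mpoly_proj (b, a) P ^ q)"
proof (rule poly_mapping_eqI)
  fix m
  let ?Al = "monomial_mod q ` keys P"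
  have index: "B0 \<times> ?Al \<subseteq> proj_index" using B0 q_pos by (auto simp: proj_index_def)
  have "lookup (\<Sum>(b, a)\<in>B0 \<times> ?Al. Poly_Mapping.single a b * mpoly_proj (b, a) P ^ q) m
      = (\<Sum>(b, a)\<in>B0 \<times> ?Al. if a = monomial_mod q m then b * rep b (lookup P m) ^ q else 0)"
    unfolding lookup_sum by (intro sum.cong) (auto simp: lookup_single_mult_pow_proj[OF subsetD[OF index]])
  also have "\<dots> = (if monomial_mod q m \<in> ?Al then (\<Sum>b\<in>B0. rep b (lookup P m) ^ q * b) else 0)"
    by (simp add: sum.cartesian_product[symmetric] mult.commute)
  also have "\<dots> = lookup P m"
  proof (cases "m \<in> keys P")
    case False
    hence "lookup P m = 0" by (simp add: in_keys_iff)
    thus ?thesis using B0 q_pos by (auto simp: rep_zero intro!: sum.neutral)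
  qed (use B0(3) in auto)
  finally show "lookup P m = lookup (\<Sum>(b, a)\<in>B0 \<times> ?Al. Poly_Mapping.single a b * mpoly_proj (b, a) P ^ q) m"
    by simp
qed

lemma frobenius_splitting_mpoly_proj: "frobenius_splitting (mpoly_ring n) q proj_index mpoly_proj"
proof (intro frobenius_splitting.intro frobenius_splitting_axioms.intro cring_mpoly_ring frobenius_linear_mpoly_proj)
  fix P :: "monomial \<Rightarrow>\<^sub>0 'k" assume P: "P \<in> carrier (mpoly_ring n)"
  let ?J = "frob_bracket (mpoly_ring n) q ((\<lambda>i. mpoly_proj i P) ` proj_index)"
  have J: "ideal ?J (mpoly_ring n)"
    using P mpoly_proj_carrier by (intro frob_bracket_ideal cring.axioms(1)[OF cring_mpoly_ring]) auto
  obtain B0 where B0: "B0 \<subseteq> B" "finite B0" "\<forall>v\<in>lookup P ` keys P. v = (\<Sum>b\<in>B0. rep b v ^ q * b)"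
    using rep_span[of "lookup P ` keys P"] by auto
  have "Poly_Mapping.single a b * mpoly_proj (b, a) P ^ q \<in> ?J"
    if ba: "b \<in> B0" "a \<in> monomial_mod q ` keys P" for a b
  proof -
    obtain m where m: "m \<in> keys P" "a = monomial_mod q m" using ba by auto
    have "keys a \<subseteq> keys m" using m by (auto simp: in_keys_iff) (metis mod_0 not_gr0)
    hence "Poly_Mapping.single a b \<in> carrier (mpoly_ring n)"
      using P m unfolding mpoly_carrier_iff by auto
    moreover have "(b, a) \<in> proj_index" using ba m B0 q_pos by (auto simp: proj_index_def)
    hence "mpoly_proj (b, a) P ^ q \<in> ?J"
      using pow_mem_frob_bracket[of "mpoly_proj (b, a) P" _ "mpoly_ring n" q] by simp
    ultimately show ?thesis using ideal.I_l_closed[OF J] by fastforce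
  qed
  hence "(\<Sum>(b, a)\<in>B0 \<times> monomial_mod q ` keys P. Poly_Mapping.single a b * mpoly_proj (b, a) P ^ q) \<in> ?J"
    by (intro mpoly_sum_mem_ideal[OF J]) auto
  thus "P \<in> ?J" using mpoly_proj_decomposition[OF B0] by simp
qed

end

lemma (in frobenius_basis) ideal_tilde_ps_ext_ideal:
  fixes A :: "(monomial \<Rightarrow>\<^sub>0 'k) set"
  assumes A: "A \<subseteq> carrier (mpoly_ring n)"
  shows "ideal_tilde (ps_ring n) CHAR('k) e (ext_ideal (ps_ring n) mpoly_to_ps A)
    = ext_ideal (ps_ring n) mpoly_to_ps (ideal_tilde (mpoly_ring n) CHAR('k) e A)"
proof -
  interpret frobenius_splitting "mpoly_ring n" q proj_index mpoly_proj
    by (rule frobenius_splitting_mpoly_proj)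
  show ?thesis
    by (rule ideal_tilde_ext_ideal[OF cring_ps_ring mpoly_to_ps_ring_hom _ _ A q_def, where \<pi>' = ps_proj])
       (simp_all add: frobenius_linear_ps_proj ps_proj_mpoly_to_ps)
qed

lemma vector_space_frobenius:
  assumes "Factorial_Ring.prime CHAR('k::field)" "q = CHAR('k) ^ e"
  shows "vector_space (\<lambda>c (v::'k). c ^ q * v)"
  by unfold_locales (simp_all add: distrib_left distrib_right freshmans_dream'[OF assms] power_mult_distrib)

lemma frobenius_basis_exists:
  assumes prime: "Factorial_Ring.prime CHAR('k::field)"
  shows "\<exists>B (rep :: 'k \<Rightarrow> 'k \<Rightarrow> 'k). frobenius_basis (CHAR('k) ^ e) e B rep"
proof -
  define q where "q = CHAR('k) ^ e"
  interpret vs: vector_space "\<lambda>c (v::'k). c ^ q * v" by (rule vector_space_frobenius[OF prime q_def])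
  obtain B where B: "vs.independent B" "UNIV \<subseteq> vs.span B"
    using vs.basis_exists[of UNIV] by blast
  define rep where "rep b v = vs.representation B v b" for b v
  have span: "v \<in> vs.span B" for v using B by auto
  have "frobenius_basis q e B rep"
  proof
    fix b x y c v :: 'k
    show "rep b (x + y) = rep b x + rep b y"
      unfolding rep_def using vs.representation_add[OF B(1) span span] by simp
    show "rep b (c ^ q * v) = c * rep b v"
      unfolding rep_def using vs.representation_scale[OF B(1) span, of c v] by simp
  next
    fix V :: "'k set" assume V: "finite V"
    define B0 where "B0 = (\<Union>v\<in>V. {b. rep b v \<noteq> 0})"
    have "finite B0" unfolding B0_def rep_def using V vs.finite_representation by auto
    moreover have "B0 \<subseteq> B" unfolding B0_def rep_def using vs.representation_ne_zero by auto
    moreover have "v = (\<Sum>b\<in>B0. rep b v ^ q * b)" if v: "v \<in> V" for v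
    proof -
      have "v = (\<Sum>b | rep b v \<noteq> 0. rep b v ^ q * b)"
        unfolding rep_def using vs.sum_nonzero_representation_eq[OF B(1) span] by simp
      also have "\<dots> = (\<Sum>b\<in>B0. rep b v ^ q * b)"
        using \<open>finite B0\<close> v q_def prime prime_gt_0_nat by (intro sum.mono_neutral_left) (auto simp: B0_def)
      finally show ?thesis .
    qed
    ultimately show "\<exists>B0\<subseteq>B. finite B0 \<and> (\<forall>v\<in>V. v = (\<Sum>b\<in>B0. rep b v ^ q * b))" by blast
  qed (use prime q_def in auto)
  thus ?thesis unfolding q_def by blast
qed

theorem mainTheorem10:
  fixes p n e :: nat and A :: "((nat \<Rightarrow>\<^sub>0 nat) \<Rightarrow>\<^sub>0 'k::field) set"
  assumes "Factorial_Ring.prime p" and "CHAR('k) = p" and "e \<ge> 1"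
    and "ideal A (mpoly_ring n)"
  shows "(\<forall>W. multiplicative_set (mpoly_ring n) W \<longrightarrow>
            ideal_tilde (loc (mpoly_ring n) W) p e (ext_ideal (loc (mpoly_ring n) W) (loc_map (mpoly_ring n) W) A)
            = ext_ideal (loc (mpoly_ring n) W) (loc_map (mpoly_ring n) W) (ideal_tilde (mpoly_ring n) p e A))
       \<and> ideal_tilde (ps_ring n) p e (ext_ideal (ps_ring n) mpoly_to_ps A)
            = ext_ideal (ps_ring n) mpoly_to_ps (ideal_tilde (mpoly_ring n) p e A)"
proof -
  obtain B and rep :: "'k \<Rightarrow> 'k \<Rightarrow> 'k" where "frobenius_basis (p ^ e) e B rep"
    using frobenius_basis_exists[where 'k='k, of e] assms(1,2) by auto
  then interpret frobenius_basis "p ^ e" e B rep .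
  interpret frobenius_splitting "mpoly_ring n" "p ^ e" proj_index mpoly_proj
    by (rule frobenius_splitting_mpoly_proj)
  have A: "A \<subseteq> carrier (mpoly_ring n)" using assms(4) by (blast dest: ideal.Icarr)
  show ?thesis
    using ideal_tilde_loc_ext_ideal[OF _ A refl q_pos] ideal_tilde_ps_ext_ideal[OF A] assms(2) by blast
qed

end
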